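(* Let $A$ be the six-element poset $\{a_1,a_2,b_1,b_2,c_1,c_2\}$ whose order is generated by $a_i<b_j$ and $b_j<c_k$ for all $i,j,k\in\{1,2\}$ (so $a_1,a_2$ are incomparable, $b_1,b_2$ are incomparable, $c_1,c_2$ are incomparable, and $a_i<c_k$). Then $A$ is not cofibrant in the model structure on $\mathbf{Pos}$.
   Context: The model structure on $\mathbf{Pos}$: a map $f$ of posets is a weak equivalence/fibration iff it is so as a functor in the Thomason model structure on $\mathbf{Cat}$ (where $F$ is a weak equivalence/fibration iff $\mathrm{Ex}^2NF$ is one in the Kan–Quillen model structure on $\mathbf{sSet}$, $N$ the nerve, $\mathrm{Ex}$ Kan's functor); cofibrations are the maps with the left lifting property against acyclic fibrations. The classifying space of $A$ is homeomorphic to $S^2$. *)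

theory Defs
  imports Main
begin

text \<open>A poset is a carrier set X together with a relation R with partial_order_on X R.\<close>

definition mono_map :: "'a set \<Rightarrow> ('a \<times> 'a) set \<Rightarrow> 'b set \<Rightarrow> ('b \<times> 'b) set \<Rightarrow> ('a \<Rightarrow> 'b) \<Rightarrow> bool" where
  "mono_map X R Y S f \<longleftrightarrow> (\<forall>x\<in>X. f x \<in> Y) \<and> (\<forall>x\<in>X. \<forall>y\<in>X. (x, y) \<in> R \<longrightarrow> (f x, f y) \<in> S)"

text \<open>Vertices of Sd(Delta^n): nonempty subsets of [n] = {0..n}, ordered by inclusion.\<close>
definition sd_simplex :: "nat \<Rightarrow> nat set set" where
  "sd_simplex n = {s. s \<noteq> {} \<and> s \<subseteq> {0..n}}"

text \<open>The poset sd(sd[n]): nonempty finite chains of nonempty subsets of [n], ordered by inclusion.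
  Its nerve is Sd^2 Delta^n.\<close>
definition sd2 :: "nat \<Rightarrow> nat set set set" where
  "sd2 n = {c. c \<noteq> {} \<and> finite c \<and> c \<subseteq> sd_simplex n \<and> (\<forall>s\<in>c. \<forall>t\<in>c. s \<subseteq> t \<or> t \<subseteq> s)}"

definition coface :: "nat \<Rightarrow> nat \<Rightarrow> nat" where
  "coface i j = (if j < i then j else Suc j)"

text \<open>n-simplices of Ex^2 N P = Hom(Sd^2 Delta^n, N P) = monotone maps sd(sd[n]) -> P
  (represented extensionally: undefined outside sd2 n).\<close>
definition ex2 :: "'a set \<Rightarrow> ('a \<times> 'a) set \<Rightarrow> nat \<Rightarrow> (nat set set \<Rightarrow> 'a) set" where
  "ex2 P R n = {g. mono_map (sd2 n) {(c, d). c \<subseteq> d} P R g \<and> (\<forall>c. c \<notin> sd2 n \<longrightarrow> g c = undefined)}"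

text \<open>Face map d_i : (Ex^2 N P)_n -> (Ex^2 N P)_(n-1), precomposition with Sd^2(delta^i).\<close>
definition ex2_face :: "nat \<Rightarrow> nat \<Rightarrow> (nat set set \<Rightarrow> 'a) \<Rightarrow> (nat set set \<Rightarrow> 'a)" where
  "ex2_face n i g = (\<lambda>c. if c \<in> sd2 (n - 1) then g ((\<lambda>s. coface i ` s) ` c) else undefined)"

definition ex2_map :: "nat \<Rightarrow> ('a \<Rightarrow> 'b) \<Rightarrow> (nat set set \<Rightarrow> 'a) \<Rightarrow> (nat set set \<Rightarrow> 'b)" where
  "ex2_map n f g = (\<lambda>c. if c \<in> sd2 n then f (g c) else undefined)"

text \<open>f : (X,R) -> (Y,S) is an acyclic fibration iff Ex^2 N f is an acyclic (= trivial) Kan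
  fibration, i.e. has the right lifting property against all boundary inclusions
  dDelta^n -> Delta^n.  A map dDelta^n -> K is a family x_0..x_n of (n-1)-simplices with
  d_i x_j = d_(j-1) x_i for i < j (empty family for n = 0).\<close>
definition pos_acyclic_fibration ::
  "'a set \<Rightarrow> ('a \<times> 'a) set \<Rightarrow> 'b set \<Rightarrow> ('b \<times> 'b) set \<Rightarrow> ('a \<Rightarrow> 'b) \<Rightarrow> bool" where
  "pos_acyclic_fibration X R Y S f \<longleftrightarrow>
     mono_map X R Y S f \<and>
     (\<forall>y\<in>ex2 Y S 0. \<exists>z\<in>ex2 X R 0. ex2_map 0 f z = y) \<and>
     (\<forall>n\<ge>1. \<forall>xs :: nat \<Rightarrow> (nat set set \<Rightarrow> 'a). \<forall>y.
        (\<forall>i\<le>n. xs i \<in> ex2 X R (n - 1)) \<and>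
        (n \<ge> 2 \<longrightarrow> (\<forall>i j. i < j \<and> j \<le> n \<longrightarrow>
             ex2_face (n - 1) i (xs j) = ex2_face (n - 1) (j - 1) (xs i))) \<and>
        y \<in> ex2 Y S n \<and>
        (\<forall>i\<le>n. ex2_face n i y = ex2_map (n - 1) f (xs i))
        \<longrightarrow> (\<exists>z\<in>ex2 X R n. (\<forall>i\<le>n. ex2_face n i z = xs i) \<and> ex2_map n f z = y))"

text \<open>(A,RA) is cofibrant iff the empty map into it has the LLP against all acyclic fibrations,
  i.e. every monotone map A -> Y lifts along every acyclic fibration X -> Y.  HOL cannot
  quantify over all types, so the quantification is over posets whose carriers live in a
  given type 'x.\<close>
definition pos_cofibrant_wrt :: "'x itself \<Rightarrow> 'a set \<Rightarrow> ('a \<times> 'a) set \<Rightarrow> bool" where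
  "pos_cofibrant_wrt _ A RA \<longleftrightarrow>
     (\<forall>(X :: 'x set) RX (Y :: 'x set) RY p.
        partial_order_on X RX \<and> partial_order_on Y RY \<and> pos_acyclic_fibration X RX Y RY p \<longrightarrow>
        (\<forall>g. mono_map A RA Y RY g \<longrightarrow>
             (\<exists>h. mono_map A RA X RX h \<and> (\<forall>a\<in>A. p (h a) = g a))))"

datatype A_elt = a1 | a2 | b1 | b2 | c1 | c2

fun A_level :: "A_elt \<Rightarrow> nat" where
  "A_level a1 = 0" | "A_level a2 = 0" | "A_level b1 = 1" | "A_level b2 = 1"
| "A_level c1 = 2" | "A_level c2 = 2"

definition A_rel :: "(A_elt \<times> A_elt) set" where
  "A_rel = {(x, y). x = y \<or> A_level x < A_level y}"

end

theory Submission
  imports Defs "HOL-Library.FuncSet" "HOL-Library.Countable_Set" "HOL-Analysis.Finite_Cartesian_Product"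
begin

(*
  The lifting property fails against one explicit acyclic fibration. For a poset Y let X be the
  union of stages X_0 = {} <= X_1 <= ..., where X_(k+1) freely adjoins, for every n, every monotone
  z : Sd^2 dDelta^n -> X_k and every y : Sd^2 Delta^n -> Y extending the image of z, a copy of the
  cone over Sd^2 dDelta^n attached along z and lying over y. Every lifting problem for the
  projection p : X -> Y against dDelta^n -> Delta^n is solved by such a cone, so p is an acyclic
  fibration, and X is countable when Y is, so it can be moved into nat.

  Take Y = A and a section s of p, with s(A) inside X_(k+1) and k minimal. If s(b1) and s(b2) are
  both new, they lie in the cone containing s(c1) and s(c2), and the union of their chains is an
  element between {s(b1), s(b2)} and {s(c1), s(c2)}; its image under p would lie between
  {b1, b2} and {c1, c2} in A, which is impossible. Otherwise s(a1) and s(a2) lie in X_k, and pushing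
  every new element of s(A) onto the boundary of its cone gives a monotone s' : A -> X_k with
  p s' <= id and p s' (a_i) = a_i; in A this forces p s' = id, contradicting the minimality of k.
*)

section \<open>Chains in the double subdivision\<close>

lemma mem_sd2_iff:
  "c \<in> sd2 n \<longleftrightarrow> c \<noteq> {} \<and> finite c \<and> (\<forall>s\<in>c. s \<noteq> {} \<and> s \<subseteq> {0..n}) \<and>
     (\<forall>s\<in>c. \<forall>t\<in>c. s \<subseteq> t \<or> t \<subseteq> s)"
  unfolding sd2_def sd_simplex_def by auto

lemma finite_sd2: "finite (sd2 n)"
  by (rule finite_subset[of _ "Pow (Pow {0..n})"]) (auto simp: sd2_def sd_simplex_def)

lemma sd2_subset:
  assumes "c \<in> sd2 n" "c' \<subseteq> c" "c' \<noteq> {}"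
  shows "c' \<in> sd2 n"
  using assms finite_subset unfolding mem_sd2_iff by (metis subsetD)

definition sd2_boundary :: "nat \<Rightarrow> nat set set set" where
  "sd2_boundary n = {c \<in> sd2 n. {0..n} \<notin> c}"

text \<open>A chain c of the cone stands for the chain insert {0..n} c of sd2 n; the empty chain is the
  apex.\<close>
definition sd2_cone :: "nat \<Rightarrow> nat set set set" where
  "sd2_cone n = insert {} (sd2_boundary n)"

lemma finite_sd2_boundary: "finite (sd2_boundary n)"
  using finite_sd2 unfolding sd2_boundary_def by simp

lemma finite_sd2_cone: "finite (sd2_cone n)"
  unfolding sd2_cone_def using finite_sd2_boundary by simp

lemma sd2_boundary_0: "sd2_boundary 0 = {}"
  unfolding sd2_boundary_def mem_sd2_iff by (force simp: subset_singleton_iff)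

lemma sd2_boundary_subset:
  "c \<in> sd2_boundary n \<Longrightarrow> c' \<subseteq> c \<Longrightarrow> c' \<noteq> {} \<Longrightarrow> c' \<in> sd2_boundary n"
  unfolding sd2_boundary_def using sd2_subset by blast

lemma sd2_cone_subset: "c \<in> sd2_cone n \<Longrightarrow> c' \<subseteq> c \<Longrightarrow> c' \<in> sd2_cone n"
  unfolding sd2_cone_def using sd2_boundary_subset by blast

lemma sd2_cone_boundary: "c \<in> sd2_cone n \<Longrightarrow> c \<noteq> {} \<Longrightarrow> c \<in> sd2_boundary n"
  unfolding sd2_cone_def by blast

lemma insert_top_sd2: "c \<in> sd2_cone n \<Longrightarrow> insert {0..n} c \<in> sd2 n"
  unfolding sd2_cone_def sd2_boundary_def mem_sd2_iff by auto

lemma sd2_minus_top: "d \<in> sd2 n \<Longrightarrow> d - {{0..n}} \<in> sd2_cone n"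
  unfolding sd2_cone_def sd2_boundary_def using sd2_subset[of d n "d - {{0..n}}"] by auto

lemma sd2_boundary_avoids_vertex:
  assumes "c \<in> sd2_boundary n"
  obtains i where "i \<le> n" "\<forall>s\<in>c. i \<notin> s"
proof -
  have c: "c \<in> sd2 n" "{0..n} \<notin> c" using assms unfolding sd2_boundary_def by auto
  then have "\<Union>c \<in> c" using Union_in_chain[of c UNIV]
    unfolding mem_sd2_iff subset.chain_def by blast
  then have "\<Union>c \<noteq> {0..n}" using c(2) by metis
  moreover have "\<Union>c \<subseteq> {0..n}" using c(1) unfolding mem_sd2_iff by blast
  ultimately have "\<Union>c \<subset> {0..n}" by blast
  then obtain i where "i \<in> {0..n}" "i \<notin> \<Union>c" by blast
  then show ?thesis using that by auto
qed

definition sd2_coface :: "nat \<Rightarrow> nat set set \<Rightarrow> nat set set" where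
  "sd2_coface i c = (\<lambda>s. coface i ` s) ` c"

text \<open>A left inverse of coface i; its value at i is irrelevant.\<close>
definition codegen :: "nat \<Rightarrow> nat \<Rightarrow> nat" where
  "codegen i j = (if j < i then j else j - 1)"

definition sd2_codegen :: "nat \<Rightarrow> nat set set \<Rightarrow> nat set set" where
  "sd2_codegen i c = (\<lambda>s. codegen i ` s) ` c"

lemma codegen_coface [simp]: "codegen i (coface i j) = j"
  unfolding codegen_def coface_def by auto

lemma coface_codegen: "j \<noteq> i \<Longrightarrow> coface i (codegen i j) = j"
  unfolding codegen_def coface_def by auto

lemma coface_coface: "i < j \<Longrightarrow> coface j (coface i x) = coface i (coface (j - 1) x)"
  unfolding coface_def by auto

lemma sd2_codegen_coface [simp]: "sd2_codegen i (sd2_coface i c) = c"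
  unfolding sd2_codegen_def sd2_coface_def by (simp add: image_image)

lemma image_coface_codegen:
  assumes "i \<notin> s"
  shows "coface i ` codegen i ` s = s"
proof -
  have "(\<lambda>j. coface i (codegen i j)) ` s = (\<lambda>j. j) ` s"
    by (rule image_cong[OF refl]) (metis assms coface_codegen)
  then show ?thesis by (simp add: image_image)
qed

lemma sd2_coface_codegen:
  assumes "\<forall>s\<in>c. i \<notin> s"
  shows "sd2_coface i (sd2_codegen i c) = c"
proof -
  have "(\<lambda>s. coface i ` codegen i ` s) ` c = (\<lambda>s. s) ` c"
    by (rule image_cong[OF refl]) (metis assms image_coface_codegen)
  then show ?thesis unfolding sd2_coface_def sd2_codegen_def by (simp add: image_image)
qed

lemma sd2_coface_sd2_coface:
  assumes "i < j"
  shows "sd2_coface j (sd2_coface i c) = sd2_coface i (sd2_coface (j - 1) c)"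
  unfolding sd2_coface_def by (simp add: image_image coface_coface[OF assms])

lemma coface_neq: "coface i j \<noteq> i"
  unfolding coface_def by simp

lemma sd2_coface_avoids: "s \<in> sd2_coface i c \<Longrightarrow> i \<notin> s"
  unfolding sd2_coface_def using coface_neq by (metis imageE)

lemma codegen_neq: "i < j \<Longrightarrow> x \<noteq> i \<Longrightarrow> x \<noteq> j \<Longrightarrow> codegen j x \<noteq> i"
  unfolding codegen_def by auto

lemma sd2_codegen_avoids:
  assumes "i < j" "\<forall>s\<in>c. i \<notin> s \<and> j \<notin> s"
  shows "\<forall>s\<in>sd2_codegen j c. i \<notin> s"
proof
  fix s assume "s \<in> sd2_codegen j c"
  then obtain t where "t \<in> c" "s = codegen j ` t" unfolding sd2_codegen_def by blast
  then show "i \<notin> s" using assms codegen_neq by (metis imageE)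
qed

lemma image_chain_sd2:
  assumes "c \<in> sd2 m" "\<And>s. s \<in> c \<Longrightarrow> f ` s \<subseteq> {0..n}"
  shows "(\<lambda>s. f ` s) ` c \<in> sd2 n"
proof -
  have "\<forall>s\<in>c. \<forall>t\<in>c. f ` s \<subseteq> f ` t \<or> f ` t \<subseteq> f ` s"
    using assms(1) unfolding mem_sd2_iff by (meson image_mono)
  then show ?thesis using assms unfolding mem_sd2_iff by auto
qed

lemma sd2_coface_sd2: "c \<in> sd2 m \<Longrightarrow> sd2_coface i c \<in> sd2 (Suc m)"
  unfolding sd2_coface_def by (rule image_chain_sd2) (fastforce simp: mem_sd2_iff coface_def)+

lemma sd2_coface_boundary: "c \<in> sd2 m \<Longrightarrow> i \<le> Suc m \<Longrightarrow> sd2_coface i c \<in> sd2_boundary (Suc m)"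
  unfolding sd2_boundary_def using sd2_coface_sd2 sd2_coface_avoids by fastforce

lemma sd2_codegen_sd2:
  assumes "c \<in> sd2 (Suc m)" "i \<le> Suc m" "\<forall>s\<in>c. i \<notin> s"
  shows "sd2_codegen i c \<in> sd2 m"
  unfolding sd2_codegen_def
  by (rule image_chain_sd2[OF assms(1)]) (use assms in \<open>fastforce simp: mem_sd2_iff codegen_def\<close>)

section \<open>Simplices and boundaries in Ex^2 N\<close>

lemma mem_ex2_iff:
  "g \<in> ex2 X R n \<longleftrightarrow> (\<forall>c\<in>sd2 n. g c \<in> X) \<and> (\<forall>c\<in>sd2 n. \<forall>d\<in>sd2 n. c \<subseteq> d \<longrightarrow> (g c, g d) \<in> R) \<and>
     (\<forall>c. c \<notin> sd2 n \<longrightarrow> g c = undefined)"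
  unfolding ex2_def mono_map_def by auto

lemma ex2_face_apply: "c \<in> sd2 (m - 1) \<Longrightarrow> ex2_face m i g c = g (sd2_coface i c)"
  unfolding ex2_face_def sd2_coface_def by simp

lemma ex2_map_apply: "c \<in> sd2 m \<Longrightarrow> ex2_map m f g c = f (g c)"
  unfolding ex2_map_def by simp

lemma ex2_map_in_ex2: "mono_map X R Y S f \<Longrightarrow> g \<in> ex2 X R m \<Longrightarrow> ex2_map m f g \<in> ex2 Y S m"
  unfolding mem_ex2_iff mono_map_def ex2_map_def by simp

lemma ex2_face_ex2_map:
  assumes "1 \<le> m"
  shows "ex2_face m i (ex2_map m f g) = ex2_map (m - 1) f (ex2_face m i g)"
proof
  fix c
  have "c \<in> sd2 (m - 1) \<Longrightarrow> sd2_coface i c \<in> sd2 m"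
    using sd2_coface_sd2[of c "m - 1" i] assms by simp
  then show "ex2_face m i (ex2_map m f g) c = ex2_map (m - 1) f (ex2_face m i g) c"
    unfolding ex2_face_def ex2_map_def sd2_coface_def by simp
qed

lemma ex2_map_ex2_map: "ex2_map m f (ex2_map m g h) = ex2_map m (f \<circ> g) h"
  unfolding ex2_map_def by auto

lemma ex2_map_id_on: "g \<in> ex2 X R m \<Longrightarrow> (\<And>x. x \<in> X \<Longrightarrow> f x = x) \<Longrightarrow> ex2_map m f g = g"
  unfolding mem_ex2_iff ex2_map_def by auto

lemma ex2_face_eqI:
  assumes "\<And>c. c \<in> sd2 (m - 1) \<Longrightarrow> g (sd2_coface i c) = h c" "h \<in> ex2 X R (m - 1)"
  shows "ex2_face m i g = h"
proof
  fix c
  show "ex2_face m i g c = h c"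
    using assms ex2_face_apply[of c m i g] unfolding mem_ex2_iff ex2_face_def by (cases "c \<in> sd2 (m - 1)") simp_all
qed

definition ex2_boundary :: "'a set \<Rightarrow> ('a \<times> 'a) set \<Rightarrow> nat \<Rightarrow> (nat \<Rightarrow> nat set set \<Rightarrow> 'a) \<Rightarrow> bool" where
  "ex2_boundary X R n xs \<longleftrightarrow> (\<forall>i\<le>n. xs i \<in> ex2 X R (n - 1)) \<and>
     (n \<ge> 2 \<longrightarrow> (\<forall>i j. i < j \<and> j \<le> n \<longrightarrow> ex2_face (n - 1) i (xs j) = ex2_face (n - 1) (j - 1) (xs i)))"

lemma pos_acyclic_fibrationI:
  assumes "mono_map X R Y S p"
    and "\<And>y. y \<in> ex2 Y S 0 \<Longrightarrow> \<exists>z\<in>ex2 X R 0. ex2_map 0 p z = y"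
    and "\<And>n xs y. 1 \<le> n \<Longrightarrow> ex2_boundary X R n xs \<Longrightarrow> y \<in> ex2 Y S n \<Longrightarrow>
           \<forall>i\<le>n. ex2_face n i y = ex2_map (n - 1) p (xs i) \<Longrightarrow>
           \<exists>z\<in>ex2 X R n. (\<forall>i\<le>n. ex2_face n i z = xs i) \<and> ex2_map n p z = y"
  shows "pos_acyclic_fibration X R Y S p"
  using assms unfolding pos_acyclic_fibration_def ex2_boundary_def by blast

lemma pos_acyclic_fibrationD:
  assumes "pos_acyclic_fibration X R Y S p"
  shows "mono_map X R Y S p"
    and "y \<in> ex2 Y S 0 \<Longrightarrow> \<exists>z\<in>ex2 X R 0. ex2_map 0 p z = y"
    and "1 \<le> n \<Longrightarrow> ex2_boundary X R n xs \<Longrightarrow> y \<in> ex2 Y S n \<Longrightarrow>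
           \<forall>i\<le>n. ex2_face n i y = ex2_map (n - 1) p (xs i) \<Longrightarrow>
           \<exists>z\<in>ex2 X R n. (\<forall>i\<le>n. ex2_face n i z = xs i) \<and> ex2_map n p z = y"
  using assms unfolding pos_acyclic_fibration_def ex2_boundary_def by blast+

lemma ex2_boundary_ex2_map:
  assumes f: "mono_map X R Y S f" and xs: "ex2_boundary X R n xs"
  shows "ex2_boundary Y S n (\<lambda>i. ex2_map (n - 1) f (xs i))"
  unfolding ex2_boundary_def
proof (intro conjI allI impI)
  show "ex2_map (n - 1) f (xs i) \<in> ex2 Y S (n - 1)" if "i \<le> n" for i
    using ex2_map_in_ex2[OF f] xs that unfolding ex2_boundary_def by blast
  show "ex2_face (n - 1) i (ex2_map (n - 1) f (xs j)) = ex2_face (n - 1) (j - 1) (ex2_map (n - 1) f (xs i))"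
    if "2 \<le> n" "i < j \<and> j \<le> n" for i j
  proof -
    have "1 \<le> n - 1" using that by simp
    then show ?thesis using xs that unfolding ex2_boundary_def by (simp add: ex2_face_ex2_map)
  qed
qed

lemma ex2_boundary_faces_agree_lt:
  assumes xs: "ex2_boundary X R n xs" and c: "c \<in> sd2_boundary n"
    and ij: "i < j" "j \<le> n" and avoid: "\<forall>s\<in>c. i \<notin> s \<and> j \<notin> s"
  shows "xs i (sd2_codegen i c) = xs j (sd2_codegen j c)"
proof -
  have c_sd2: "c \<in> sd2 n" using c unfolding sd2_boundary_def by blast
  then have "c \<noteq> {}" "\<forall>s\<in>c. s \<noteq> {} \<and> s \<subseteq> {0..n}" unfolding mem_sd2_iff by simp_all
  then obtain s where "s \<in> c" "s \<noteq> {}" "s \<subseteq> {0..n}" by blast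
  then obtain x where "x \<le> n" "x \<noteq> i" "x \<noteq> j" using avoid by fastforce
  then have n2: "n \<ge> 2" using ij by presburger
  then have n_eq: "Suc (n - 1) = n" "Suc (n - 1 - 1) = n - 1" by simp_all
  define c' where "c' = sd2_codegen j c"
  have c': "c' \<in> sd2 (n - 1)" "\<forall>s\<in>c'. i \<notin> s"
    using sd2_codegen_sd2[of c "n - 1" j] c_sd2 ij(2) avoid sd2_codegen_avoids[OF ij(1) avoid]
    unfolding c'_def n_eq by simp_all
  \<comment> \<open>c0 is the common face of the faces i and j; the cosimplicial identity places it as
    face i of face j and as face j - 1 of face i.\<close>
  define c0 where "c0 = sd2_codegen i c'"
  have c0: "c0 \<in> sd2 (n - 1 - 1)"
    using sd2_codegen_sd2[of c' "n - 1 - 1" i] c' ij unfolding c0_def n_eq by simp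
  have c'_eq: "sd2_coface i c0 = c'" unfolding c0_def using sd2_coface_codegen[OF c'(2)] .
  have "sd2_coface i (sd2_coface (j - 1) c0) = sd2_coface j (sd2_coface i c0)"
    by (rule sym[OF sd2_coface_sd2_coface[OF ij(1)]])
  also have "\<dots> = c"
    unfolding c'_eq c'_def by (rule sd2_coface_codegen) (use avoid in blast)
  finally have "sd2_codegen i (sd2_coface i (sd2_coface (j - 1) c0)) = sd2_codegen i c"
    by (rule arg_cong)
  then have ci_eq: "sd2_coface (j - 1) c0 = sd2_codegen i c"
    by (simp only: sd2_codegen_coface)
  have "xs j c' = ex2_face (n - 1) i (xs j) c0" using ex2_face_apply[OF c0, of i "xs j"] c'_eq by simp
  also have "\<dots> = ex2_face (n - 1) (j - 1) (xs i) c0"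
    using xs ij n2 unfolding ex2_boundary_def by simp
  also have "\<dots> = xs i (sd2_codegen i c)" using ex2_face_apply[OF c0, of "j - 1" "xs i"] ci_eq by simp
  finally show ?thesis unfolding c'_def by simp
qed

lemma ex2_boundary_faces_agree:
  assumes "ex2_boundary X R n xs" "c \<in> sd2_boundary n" "i \<le> n" "j \<le> n"
    "\<forall>s\<in>c. i \<notin> s" "\<forall>s\<in>c. j \<notin> s"
  shows "xs i (sd2_codegen i c) = xs j (sd2_codegen j c)"
proof -
  have avoid: "\<forall>s\<in>c. i \<notin> s \<and> j \<notin> s" using assms(5,6) by blast
  consider "i < j" | "i = j" | "j < i" by linarith
  then show ?thesis
  proof cases
    case 1
    show ?thesis by (rule ex2_boundary_faces_agree_lt[OF assms(1,2) 1 assms(4) avoid])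
  next
    case 2
    then show ?thesis by simp
  next
    case 3
    have "\<forall>s\<in>c. j \<notin> s \<and> i \<notin> s" using avoid by blast
    from ex2_boundary_faces_agree_lt[OF assms(1,2) 3 assms(3) this] show ?thesis by (rule sym)
  qed
qed

text \<open>The map Sd^2 dDelta^n -> X glued from the faces: a chain avoiding vertex i is read off
  face i, independently of i by ex2_boundary_faces_agree.\<close>
definition ex2_glue :: "nat \<Rightarrow> (nat \<Rightarrow> nat set set \<Rightarrow> 'a) \<Rightarrow> nat set set \<Rightarrow> 'a" where
  "ex2_glue n xs c =
     (let i = SOME i. i \<le> n \<and> (\<forall>s\<in>c. i \<notin> s) in
      if c \<in> sd2_boundary n then xs i (sd2_codegen i c) else undefined)"

lemma ex2_glue_eq:
  assumes "ex2_boundary X R n xs" "c \<in> sd2_boundary n" "i \<le> n" "\<forall>s\<in>c. i \<notin> s"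
  shows "ex2_glue n xs c = xs i (sd2_codegen i c)"
proof -
  define k where "k = (SOME i. i \<le> n \<and> (\<forall>s\<in>c. i \<notin> s))"
  have "\<exists>i. i \<le> n \<and> (\<forall>s\<in>c. i \<notin> s)" using assms(2) sd2_boundary_avoids_vertex by metis
  then have "k \<le> n \<and> (\<forall>s\<in>c. k \<notin> s)" unfolding k_def by (rule someI_ex)
  then have k: "k \<le> n" "\<forall>s\<in>c. k \<notin> s" by simp_all
  have "ex2_glue n xs c = xs k (sd2_codegen k c)"
    using assms(2) unfolding ex2_glue_def Let_def k_def by simp
  also have "\<dots> = xs i (sd2_codegen i c)"
    by (rule ex2_boundary_faces_agree[OF assms(1,2) k(1) assms(3) k(2) assms(4)])
  finally show ?thesis .
qed

lemma sd2_codegen_boundary: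
  assumes "c \<in> sd2_boundary n" "i \<le> n" "\<forall>s\<in>c. i \<notin> s"
  shows "sd2_codegen i c \<in> sd2 (n - 1)"
proof (cases n)
  case 0
  then show ?thesis using assms(1) sd2_boundary_0 by simp
next
  case (Suc m)
  then show ?thesis using sd2_codegen_sd2[of c m i] assms unfolding sd2_boundary_def by simp
qed

lemma ex2_glue_in:
  assumes "ex2_boundary X R n xs" "q \<in> sd2_boundary n"
  shows "ex2_glue n xs q \<in> X"
proof -
  obtain i where i: "i \<le> n" "\<forall>s\<in>q. i \<notin> s" using sd2_boundary_avoids_vertex[OF assms(2)] .
  show ?thesis
    using ex2_glue_eq[OF assms i] sd2_codegen_boundary[OF assms(2) i] assms(1) i(1)
    unfolding ex2_boundary_def mem_ex2_iff by simp
qed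

lemma ex2_glue_PiE:
  assumes "ex2_boundary X R n xs"
  shows "ex2_glue n xs \<in> sd2_boundary n \<rightarrow>\<^sub>E X"
  using ex2_glue_in[OF assms] unfolding PiE_iff extensional_def ex2_glue_def Let_def by simp

lemma ex2_glue_mono:
  assumes "ex2_boundary X R n xs" "q1 \<in> sd2_boundary n" "q2 \<in> sd2_boundary n" "q1 \<subseteq> q2"
  shows "(ex2_glue n xs q1, ex2_glue n xs q2) \<in> R"
proof -
  obtain i where i: "i \<le> n" "\<forall>s\<in>q2. i \<notin> s" using sd2_boundary_avoids_vertex[OF assms(3)] .
  then have i1: "\<forall>s\<in>q1. i \<notin> s" using assms(4) by blast
  have "sd2_codegen i q1 \<subseteq> sd2_codegen i q2" using assms(4) unfolding sd2_codegen_def by blast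
  then show ?thesis
    using ex2_glue_eq[OF assms(1,2) i(1) i1] ex2_glue_eq[OF assms(1,3) i]
      sd2_codegen_boundary[OF assms(2) i(1) i1] sd2_codegen_boundary[OF assms(3) i] assms(1) i(1)
    unfolding ex2_boundary_def mem_ex2_iff by simp
qed

lemma ex2_glue_coface:
  assumes "ex2_boundary X R n xs" "1 \<le> n" "i \<le> n" "c \<in> sd2 (n - 1)"
  shows "ex2_glue n xs (sd2_coface i c) = xs i c"
proof -
  have "sd2_coface i c \<in> sd2_boundary n"
    using sd2_coface_boundary[OF assms(4), of i] assms(2,3) by simp
  then show ?thesis using ex2_glue_eq[OF assms(1) _ assms(3)] sd2_coface_avoids by simp
qed

lemma ex2_glue_proj:
  assumes xs: "ex2_boundary X R n xs" and y: "\<forall>i\<le>n. ex2_face n i y = ex2_map (n - 1) p (xs i)"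
    and q: "q \<in> sd2_boundary n"
  shows "p (ex2_glue n xs q) = y q"
proof -
  obtain i where i: "i \<le> n" "\<forall>s\<in>q. i \<notin> s" using sd2_boundary_avoids_vertex[OF q] .
  have q': "sd2_codegen i q \<in> sd2 (n - 1)" using sd2_codegen_boundary[OF q i] .
  have "ex2_face n i y (sd2_codegen i q) = y (sd2_coface i (sd2_codegen i q))"
    by (rule ex2_face_apply[OF q'])
  then have "y q = ex2_face n i y (sd2_codegen i q)" using sd2_coface_codegen[OF i(2)] by simp
  also have "\<dots> = p (xs i (sd2_codegen i q))" using y i(1) ex2_map_apply[OF q'] by simp
  finally show ?thesis using ex2_glue_eq[OF xs q i] by simp
qed

section \<open>The free acyclic fibration over a poset\<close>

text \<open>Cell n z y c is the point, with chain insert {0..n} c, of the cone attached along the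
  boundary map z and lying over the simplex y; Base only makes the datatype inhabited.\<close>
datatype 'b cell = Base | Cell nat "nat set set \<Rightarrow> 'b cell" "nat set set \<Rightarrow> 'b" "nat set set"

primrec cell_down :: "'b cell \<Rightarrow> 'b cell set" where
  "cell_down Base = {Base}"
| "cell_down (Cell n z y c) =
     {Cell n z y c' | c'. c' \<subseteq> c} \<union> (if c = {} then {} else (cell_down \<circ> z) c)"

primrec cell_proj :: "'b cell \<Rightarrow> 'b" where
  "cell_proj Base = undefined"
| "cell_proj (Cell n z y c) = y (insert {0..n} c)"

definition cell_data ::
  "'b set \<Rightarrow> ('b \<times> 'b) set \<Rightarrow> 'b cell set \<Rightarrow> nat \<Rightarrow> (nat set set \<Rightarrow> 'b cell) \<Rightarrow>
   (nat set set \<Rightarrow> 'b) \<Rightarrow> nat set set \<Rightarrow> bool" where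
  "cell_data Y S K n z y c \<longleftrightarrow> c \<in> sd2_cone n \<and> z \<in> sd2_boundary n \<rightarrow>\<^sub>E K \<and> y \<in> sd2 n \<rightarrow>\<^sub>E Y \<and>
     (\<forall>d\<in>sd2 n. \<forall>d'\<in>sd2 n. d \<subseteq> d' \<longrightarrow> (y d, y d') \<in> S) \<and>
     (\<forall>q1\<in>sd2_boundary n. \<forall>q2\<in>sd2_boundary n. q1 \<subseteq> q2 \<longrightarrow> z q1 \<in> cell_down (z q2)) \<and>
     (\<forall>q\<in>sd2_boundary n. cell_proj (z q) = y q)"

primrec skel :: "'b set \<Rightarrow> ('b \<times> 'b) set \<Rightarrow> nat \<Rightarrow> 'b cell set" where
  "skel Y S 0 = {}"
| "skel Y S (Suc k) = {Cell n z y c | n z y c. cell_data Y S (skel Y S k) n z y c}"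

definition cells :: "'b set \<Rightarrow> ('b \<times> 'b) set \<Rightarrow> 'b cell set" where
  "cells Y S = (\<Union>k. skel Y S k)"

definition cells_rel :: "'b set \<Rightarrow> ('b \<times> 'b) set \<Rightarrow> ('b cell \<times> 'b cell) set" where
  "cells_rel Y S = {(x, e). x \<in> cells Y S \<and> e \<in> cells Y S \<and> x \<in> cell_down e}"

lemma cell_dataD:
  assumes "cell_data Y S K n z y c"
  shows "c \<in> sd2_cone n"
    and "q \<in> sd2_boundary n \<Longrightarrow> z q \<in> K"
    and "d \<in> sd2 n \<Longrightarrow> y d \<in> Y"
    and "d \<in> sd2 n \<Longrightarrow> d' \<in> sd2 n \<Longrightarrow> d \<subseteq> d' \<Longrightarrow> (y d, y d') \<in> S"
    and "q1 \<in> sd2_boundary n \<Longrightarrow> q2 \<in> sd2_boundary n \<Longrightarrow> q1 \<subseteq> q2 \<Longrightarrow> z q1 \<in> cell_down (z q2)"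
    and "q \<in> sd2_boundary n \<Longrightarrow> cell_proj (z q) = y q"
  using assms unfolding cell_data_def by (simp_all add: PiE_iff)

lemma cell_data_mono:
  assumes "cell_data Y S K n z y c" "K \<subseteq> K'"
  shows "cell_data Y S K' n z y c"
proof -
  have "sd2_boundary n \<rightarrow>\<^sub>E K \<subseteq> sd2_boundary n \<rightarrow>\<^sub>E K'"
    by (rule PiE_mono) (use assms(2) in blast)
  then show ?thesis using assms(1) unfolding cell_data_def by (elim conjE) (intro conjI; blast)
qed

lemma cell_data_cone: "cell_data Y S K n z y c \<Longrightarrow> c' \<in> sd2_cone n \<Longrightarrow> cell_data Y S K n z y c'"
  unfolding cell_data_def by (elim conjE) (intro conjI)

lemma cell_data_attached: "cell_data Y S K n z y c \<Longrightarrow> c \<noteq> {} \<Longrightarrow> z c \<in> K"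
  using cell_dataD(1,2) sd2_cone_boundary by blast

lemma cell_data_attached_mono:
  assumes ok: "cell_data Y S K n z y c" and "c' \<subseteq> c" "c' \<noteq> {}"
  shows "z c' \<in> cell_down (z c)"
proof -
  have "c \<in> sd2_boundary n" "c' \<in> sd2_boundary n"
    using assms cell_dataD(1)[OF ok] sd2_cone_subset sd2_cone_boundary by blast+
  then show ?thesis using cell_dataD(5)[OF ok] assms(2) by blast
qed

lemma Cell_in_skel_cone:
  "Cell n z y c \<in> skel Y S k \<Longrightarrow> c' \<in> sd2_cone n \<Longrightarrow> Cell n z y c' \<in> skel Y S k"
  by (cases k) (auto intro: cell_data_cone)

lemma skel_SucE:
  assumes "e \<in> skel Y S (Suc k)"
  obtains n z y c where "e = Cell n z y c" "cell_data Y S (skel Y S k) n z y c"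
  using assms by auto

lemma skel_mono_Suc: "skel Y S k \<subseteq> skel Y S (Suc k)"
proof (induction k)
  case (Suc k)
  then show ?case using cell_data_mono[of Y S "skel Y S k" _ _ _ _ "skel Y S (Suc k)"] by auto
qed simp

lemma skel_mono: "k \<le> k' \<Longrightarrow> skel Y S k \<subseteq> skel Y S k'"
  by (induction k' rule: dec_induct) (use skel_mono_Suc in blast)+

lemma cell_down_refl: "e \<in> cell_down e"
  by (cases e) auto

lemma cell_down_CellE:
  assumes "x \<in> cell_down (Cell n z y c)"
  obtains c' where "c' \<subseteq> c" "x = Cell n z y c'" | "c \<noteq> {}" "x \<in> cell_down (z c)"
  using assms by (cases "c = {}") auto

lemma cell_down_skel: "e \<in> skel Y S k \<Longrightarrow> cell_down e \<subseteq> skel Y S k"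
proof (induction k arbitrary: e)
  case (Suc k)
  obtain n z y c where e: "e = Cell n z y c" and ok: "cell_data Y S (skel Y S k) n z y c"
    using Suc.prems by (rule skel_SucE)
  show ?case
  proof
    fix x assume "x \<in> cell_down e"
    then show "x \<in> skel Y S (Suc k)"
      unfolding e
    proof (cases rule: cell_down_CellE)
      case (1 c')
      have "c' \<in> sd2_cone n" using sd2_cone_subset cell_dataD(1)[OF ok] 1(1) by blast
      then have "cell_data Y S (skel Y S k) n z y c'" by (rule cell_data_cone[OF ok])
      then show ?thesis using 1(2) by simp
    next
      case 2
      then show ?thesis using Suc.IH cell_data_attached[OF ok] skel_mono_Suc by blast
    qed
  qed
qed simp

lemma cell_down_attached: "c \<noteq> {} \<Longrightarrow> z c \<in> cell_down (Cell n z y c)"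
  using cell_down_refl[of "z c"] by simp

lemma cell_down_trans_skel:
  "e \<in> skel Y S k \<Longrightarrow> w \<in> cell_down e \<Longrightarrow> x \<in> cell_down w \<Longrightarrow> x \<in> cell_down e"
proof (induction k arbitrary: e w x)
  case (Suc k)
  obtain n z y c where e: "e = Cell n z y c" and ok: "cell_data Y S (skel Y S k) n z y c"
    using Suc.prems(1) by (rule skel_SucE)
  from Suc.prems(2)[unfolded e] show ?case
  proof (cases rule: cell_down_CellE)
    case (1 c')
    from Suc.prems(3)[unfolded 1(2)] show ?thesis
    proof (cases rule: cell_down_CellE)
      case (1 c'')
      then show ?thesis using \<open>c' \<subseteq> c\<close> e by auto
    next
      case 2
      have "c \<noteq> {}" using 2(1) \<open>c' \<subseteq> c\<close> by blast
      then have "x \<in> cell_down (z c)"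
        using Suc.IH cell_data_attached[OF ok] cell_data_attached_mono[OF ok \<open>c' \<subseteq> c\<close> 2(1)] 2(2)
        by blast
      then show ?thesis using \<open>c \<noteq> {}\<close> e by simp
    qed
  next
    case 2
    then show ?thesis using Suc.IH[OF cell_data_attached[OF ok]] Suc.prems(3) e by simp
  qed
qed simp

lemma Cell_neq_attached: "z q \<noteq> Cell n z y c"
proof -
  have "x \<in> range z \<Longrightarrow> x \<noteq> Cell n z y c" for x and z :: "nat set set \<Rightarrow> 'b cell" and n y c
  proof (induction x arbitrary: n z y c)
    case (Cell n' z' y' c')
    then show ?case by (metis cell.inject rangeI)
  qed simp
  then show ?thesis by blast
qed

lemma cell_down_antisym_skel:
  "e \<in> skel Y S k \<Longrightarrow> x \<in> cell_down e \<Longrightarrow> e \<in> cell_down x \<Longrightarrow> x = e"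
proof (induction k arbitrary: e x)
  case (Suc k)
  obtain n z y c where e: "e = Cell n z y c" and ok: "cell_data Y S (skel Y S k) n z y c"
    using Suc.prems(1) by (rule skel_SucE)
  have not_below_attached: "e \<notin> cell_down (z c')" if "c' \<subseteq> c" "c' \<noteq> {}" for c'
  proof
    assume "e \<in> cell_down (z c')"
    then have "e \<in> cell_down (z c)"
      using cell_down_trans_skel cell_data_attached[OF ok] cell_data_attached_mono[OF ok that] that
      by blast
    moreover have "z c \<in> cell_down e" using cell_down_attached that e by blast
    ultimately have "z c = e" using Suc.IH cell_data_attached[OF ok] that by blast
    then show False using Cell_neq_attached e by metis
  qed
  from Suc.prems(2)[unfolded e] show ?case
  proof (cases rule: cell_down_CellE)
    case (1 c')
    from Suc.prems(3)[unfolded 1(2) e] show ?thesis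
    proof (cases rule: cell_down_CellE)
      case (1 c'')
      then show ?thesis using \<open>c' \<subseteq> c\<close> \<open>x = Cell n z y c'\<close> e by auto
    next
      case 2
      then show ?thesis using not_below_attached \<open>c' \<subseteq> c\<close> e by blast
    qed
  next
    case 2
    then have "e \<in> cell_down (z c)" using cell_down_trans_skel cell_data_attached[OF ok] Suc.prems(3) by blast
    then show ?thesis using not_below_attached 2(1) by blast
  qed
qed simp

lemma cell_proj_skel:
  assumes "trans S" "e \<in> skel Y S k"
  shows "cell_proj e \<in> Y \<and> (\<forall>x\<in>cell_down e. (cell_proj x, cell_proj e) \<in> S)"
  using assms(2)
proof (induction k arbitrary: e)
  case (Suc k)
  obtain n z y c where e: "e = Cell n z y c" and ok: "cell_data Y S (skel Y S k) n z y c"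
    using Suc.prems by (rule skel_SucE)
  have top: "insert {0..n} c \<in> sd2 n" using insert_top_sd2 cell_dataD(1)[OF ok] .
  have "(cell_proj x, cell_proj e) \<in> S" if "x \<in> cell_down (Cell n z y c)" for x
    using that
  proof (cases rule: cell_down_CellE)
    case (1 c')
    then have "insert {0..n} c' \<in> sd2 n"
      using insert_top_sd2 sd2_cone_subset cell_dataD(1)[OF ok] by blast
    then have "(y (insert {0..n} c'), y (insert {0..n} c)) \<in> S"
      using cell_dataD(4)[OF ok _ top] 1(1) by blast
    then show ?thesis using 1(2) e by simp
  next
    case 2
    have c: "c \<in> sd2_boundary n" using sd2_cone_boundary cell_dataD(1)[OF ok] 2(1) .
    have "(cell_proj x, cell_proj (z c)) \<in> S" using Suc.IH cell_data_attached[OF ok 2(1)] 2(2) by blast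
    moreover have "cell_proj (z c) = y c" using cell_dataD(6)[OF ok c] .
    moreover have "(y c, y (insert {0..n} c)) \<in> S"
      using cell_dataD(4)[OF ok _ top] c unfolding sd2_boundary_def by blast
    ultimately have "(cell_proj x, y (insert {0..n} c)) \<in> S" using assms(1) by (metis transD)
    then show ?thesis using e by simp
  qed
  then show ?case using cell_dataD(3)[OF ok top] e by simp
qed simp

lemma partial_order_cells: "partial_order_on (cells Y S) (cells_rel Y S)"
  unfolding partial_order_on_def preorder_on_def
proof (intro conjI)
  show "cells_rel Y S \<subseteq> cells Y S \<times> cells Y S" unfolding cells_rel_def by auto
  show "refl_on (cells Y S) (cells_rel Y S)" unfolding refl_on_def cells_rel_def using cell_down_refl by blast
  show "trans (cells_rel Y S)"
    unfolding trans_def cells_rel_def cells_def using cell_down_trans_skel by blast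
  show "antisym (cells_rel Y S)"
    unfolding antisym_def cells_rel_def cells_def using cell_down_antisym_skel by blast
qed

lemma mono_map_cell_proj: "trans S \<Longrightarrow> mono_map (cells Y S) (cells_rel Y S) Y S cell_proj"
  unfolding mono_map_def cells_rel_def cells_def using cell_proj_skel by blast

lemma PiE_cells_skel:
  assumes "z \<in> sd2_boundary n \<rightarrow>\<^sub>E cells Y S"
  obtains k where "z \<in> sd2_boundary n \<rightarrow>\<^sub>E skel Y S k"
proof -
  have "\<forall>q\<in>sd2_boundary n. \<exists>k. z q \<in> skel Y S k" using assms unfolding cells_def by blast
  then obtain lvl where lvl: "\<forall>q\<in>sd2_boundary n. z q \<in> skel Y S (lvl q)" by metis
  define k where "k = Max (lvl ` sd2_boundary n)"
  have "z q \<in> skel Y S k" if "q \<in> sd2_boundary n" for q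
  proof -
    have "lvl q \<le> k" unfolding k_def using that finite_sd2_boundary by simp
    then show ?thesis using skel_mono lvl that by blast
  qed
  then have "z \<in> sd2_boundary n \<rightarrow>\<^sub>E skel Y S k" using assms unfolding PiE_iff by simp
  then show ?thesis by (rule that)
qed

definition cone_fill :: "nat \<Rightarrow> (nat set set \<Rightarrow> 'b cell) \<Rightarrow> (nat set set \<Rightarrow> 'b) \<Rightarrow> nat set set \<Rightarrow> 'b cell" where
  "cone_fill n z y d =
     (if d \<in> sd2 n then if {0..n} \<in> d then Cell n z y (d - {{0..n}}) else z d else undefined)"

lemma cone_fill_boundary: "d \<in> sd2_boundary n \<Longrightarrow> cone_fill n z y d = z d"
  unfolding cone_fill_def sd2_boundary_def by simp

lemma cone_fill_mono:
  assumes z_mono: "\<forall>q1\<in>sd2_boundary n. \<forall>q2\<in>sd2_boundary n. q1 \<subseteq> q2 \<longrightarrow> z q1 \<in> cell_down (z q2)"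
    and d: "d \<in> sd2 n" "d' \<in> sd2 n" "d \<subseteq> d'"
  shows "cone_fill n z y d \<in> cell_down (cone_fill n z y d')"
proof (cases "{0..n} \<in> d'")
  case False
  then show ?thesis using d z_mono unfolding cone_fill_def sd2_boundary_def by auto
next
  case top: True
  show ?thesis
  proof (cases "{0..n} \<in> d")
    case True
    then show ?thesis using top d unfolding cone_fill_def by auto
  next
    case False
    define c where "c = d' - {{0..n}}"
    have "d \<noteq> {}" using d(1) unfolding mem_sd2_iff by simp
    then have "c \<noteq> {}" "d \<subseteq> c" using d(3) False unfolding c_def by auto
    moreover have "c \<in> sd2_boundary n" "d \<in> sd2_boundary n"
      using sd2_minus_top[OF d(2)] sd2_cone_boundary \<open>c \<noteq> {}\<close> d(1) False
      unfolding c_def sd2_boundary_def by auto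
    ultimately have "z d \<in> cell_down (Cell n z y c)" using z_mono by simp
    then show ?thesis using d top False unfolding cone_fill_def c_def by simp
  qed
qed

lemma cone_fill:
  assumes z: "z \<in> sd2_boundary n \<rightarrow>\<^sub>E cells Y S"
    and z_mono: "\<forall>q1\<in>sd2_boundary n. \<forall>q2\<in>sd2_boundary n. q1 \<subseteq> q2 \<longrightarrow> z q1 \<in> cell_down (z q2)"
    and z_proj: "\<forall>q\<in>sd2_boundary n. cell_proj (z q) = y q"
    and y: "y \<in> ex2 Y S n"
  shows "cone_fill n z y \<in> ex2 (cells Y S) (cells_rel Y S) n"
    and "ex2_map n cell_proj (cone_fill n z y) = y"
proof -
  obtain k where zk: "z \<in> sd2_boundary n \<rightarrow>\<^sub>E skel Y S k" using z by (rule PiE_cells_skel)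
  have y_PiE: "y \<in> sd2 n \<rightarrow>\<^sub>E Y" using y unfolding mem_ex2_iff PiE_iff extensional_def by simp
  have y_mono: "\<forall>d\<in>sd2 n. \<forall>d'\<in>sd2 n. d \<subseteq> d' \<longrightarrow> (y d, y d') \<in> S"
    using y unfolding mem_ex2_iff by (elim conjE)
  have "cell_data Y S (skel Y S k) n z y c" if "c \<in> sd2_cone n" for c
    unfolding cell_data_def using that zk y_PiE y_mono z_mono z_proj by (intro conjI)
  then have "Cell n z y c \<in> skel Y S (Suc k)" if "c \<in> sd2_cone n" for c
    using that by simp
  then have cell: "Cell n z y c \<in> cells Y S" if "c \<in> sd2_cone n" for c
    using that unfolding cells_def by blast
  have in_cells: "cone_fill n z y d \<in> cells Y S" if "d \<in> sd2 n" for d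
    using that cell sd2_minus_top PiE_mem[OF z] unfolding cone_fill_def sd2_boundary_def by auto
  have undef: "cone_fill n z y d = undefined" if "d \<notin> sd2 n" for d
    using that unfolding cone_fill_def by simp
  show "cone_fill n z y \<in> ex2 (cells Y S) (cells_rel Y S) n"
    unfolding mem_ex2_iff cells_rel_def using in_cells cone_fill_mono[OF z_mono] undef by simp
  have "cell_proj (cone_fill n z y d) = y d" if "d \<in> sd2 n" for d
  proof (cases "{0..n} \<in> d")
    case True
    then have "insert {0..n} (d - {{0..n}}) = d" by blast
    then show ?thesis using True that unfolding cone_fill_def by simp
  next
    case False
    then show ?thesis using that z_proj unfolding cone_fill_def sd2_boundary_def by simp
  qed
  then show "ex2_map n cell_proj (cone_fill n z y) = y"
    using y unfolding ex2_map_def mem_ex2_iff by auto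
qed

theorem pos_acyclic_fibration_cell_proj:
  assumes "trans S"
  shows "pos_acyclic_fibration (cells Y S) (cells_rel Y S) Y S cell_proj"
proof (rule pos_acyclic_fibrationI)
  show "mono_map (cells Y S) (cells_rel Y S) Y S cell_proj" using mono_map_cell_proj[OF assms] .
next
  fix y assume y: "y \<in> ex2 Y S 0"
  have "(\<lambda>_. undefined) \<in> sd2_boundary 0 \<rightarrow>\<^sub>E cells Y S" by (simp add: sd2_boundary_0)
  from cone_fill[OF this _ _ y] show "\<exists>z\<in>ex2 (cells Y S) (cells_rel Y S) 0. ex2_map 0 cell_proj z = y"
    unfolding sd2_boundary_0 by blast
next
  fix n xs y
  assume n: "1 \<le> n" and xs: "ex2_boundary (cells Y S) (cells_rel Y S) n xs" and y: "y \<in> ex2 Y S n"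
    and faces: "\<forall>i\<le>n. ex2_face n i y = ex2_map (n - 1) cell_proj (xs i)"
  define z where "z = ex2_glue n xs"
  have z: "z \<in> sd2_boundary n \<rightarrow>\<^sub>E cells Y S" unfolding z_def using ex2_glue_PiE[OF xs] .
  have z_mono: "\<forall>q1\<in>sd2_boundary n. \<forall>q2\<in>sd2_boundary n. q1 \<subseteq> q2 \<longrightarrow> z q1 \<in> cell_down (z q2)"
    unfolding z_def using ex2_glue_mono[OF xs] unfolding cells_rel_def by blast
  have z_proj: "\<forall>q\<in>sd2_boundary n. cell_proj (z q) = y q"
    unfolding z_def using ex2_glue_proj[OF xs faces] by blast
  have "ex2_face n i (cone_fill n z y) = xs i" if i: "i \<le> n" for i
  proof (rule ex2_face_eqI)
    fix c assume c: "c \<in> sd2 (n - 1)"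
    have "sd2_coface i c \<in> sd2_boundary n" using sd2_coface_boundary[OF c, of i] n i by simp
    then have "cone_fill n z y (sd2_coface i c) = z (sd2_coface i c)" by (rule cone_fill_boundary)
    then show "cone_fill n z y (sd2_coface i c) = xs i c"
      using ex2_glue_coface[OF xs n i c] unfolding z_def by simp
  next
    show "xs i \<in> ex2 (cells Y S) (cells_rel Y S) (n - 1)" using xs i unfolding ex2_boundary_def by blast
  qed
  then show "\<exists>w\<in>ex2 (cells Y S) (cells_rel Y S) n.
      (\<forall>i\<le>n. ex2_face n i w = xs i) \<and> ex2_map n cell_proj w = y"
    using cone_fill[OF z z_mono z_proj y] by blast
qed

lemma countable_skel:
  assumes "countable Y"
  shows "countable (skel Y S k)"
proof (induction k)
  case (Suc k)
  let ?T = "SIGMA n:UNIV. (sd2_boundary n \<rightarrow>\<^sub>E skel Y S k) \<times> (sd2 n \<rightarrow>\<^sub>E Y) \<times> sd2_cone n"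
  have "countable ((sd2_boundary n \<rightarrow>\<^sub>E skel Y S k) \<times> (sd2 n \<rightarrow>\<^sub>E Y) \<times> sd2_cone n)" for n
  proof -
    have "countable (sd2_boundary n \<rightarrow>\<^sub>E skel Y S k)"
      using finite_sd2_boundary Suc.IH by (rule countable_PiE)
    moreover have "countable (sd2 n \<rightarrow>\<^sub>E Y)" using finite_sd2 assms by (rule countable_PiE)
    moreover have "countable (sd2_cone n)" using finite_sd2_cone by (rule countable_finite)
    ultimately show ?thesis by (intro countable_SIGMA)
  qed
  then have "countable ?T" by (intro countable_SIGMA[OF countableI_type])
  moreover have "skel Y S (Suc k) \<subseteq> (\<lambda>(n, z, y, c). Cell n z y c) ` ?T"
  proof
    fix e assume "e \<in> skel Y S (Suc k)"
    then obtain n z y c where e: "e = Cell n z y c" and ok: "cell_data Y S (skel Y S k) n z y c"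
      by (rule skel_SucE)
    have "(n, z, y, c) \<in> ?T" using ok unfolding cell_data_def by simp
    then show "e \<in> (\<lambda>(n, z, y, c). Cell n z y c) ` ?T" unfolding e by (rule rev_image_eqI) simp
  qed
  ultimately show ?case by (rule countable_subset[OF _ countable_image, rotated])
qed simp

lemma countable_cells: "countable Y \<Longrightarrow> countable (cells Y S)"
  unfolding cells_def using countable_skel by blast

section \<open>Transport along an injection\<close>

lemma partial_order_on_Field: "partial_order_on A r \<Longrightarrow> Field r = A"
  unfolding partial_order_on_def preorder_on_def refl_on_def Field_def by blast

lemma partial_order_on_dir_image:
  assumes "partial_order_on A r" "inj_on f A"
  shows "partial_order_on (f ` A) (dir_image r f)"
  using Partial_order_dir_image[of r f] dir_image_Field[of r f] partial_order_on_Field assms by metis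

lemma mono_map_comp: "mono_map A R B S g \<Longrightarrow> mono_map B S C T f \<Longrightarrow> mono_map A R C T (f \<circ> g)"
  unfolding mono_map_def by simp

lemma mono_map_dir_image: "r \<subseteq> A \<times> A \<Longrightarrow> mono_map A r (f ` A) (dir_image r f) f"
  unfolding mono_map_def dir_image_def by blast

lemma mono_map_inv_dir_image:
  assumes "inj_on f A" "r \<subseteq> A \<times> A"
  shows "mono_map (f ` A) (dir_image r f) A r (inv_into A f)"
  unfolding mono_map_def
proof (intro conjI ballI impI)
  show "inv_into A f u \<in> A" if "u \<in> f ` A" for u using that by (rule inv_into_into)
  fix u v assume "(u, v) \<in> dir_image r f"
  then obtain a b where "(a, b) \<in> r" "u = f a" "v = f b" unfolding dir_image_def by blast
  moreover from this have "a \<in> A" "b \<in> A" using assms(2) by auto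
  ultimately show "(inv_into A f u, inv_into A f v) \<in> r" using inv_into_f_f[OF assms(1)] by simp
qed

lemma ex2_map_inv_into:
  assumes "inj_on f X" "z \<in> ex2 X R m"
  shows "ex2_map m (p \<circ> inv_into X f) (ex2_map m f z) = ex2_map m p z"
proof -
  have "ex2_map m (inv_into X f \<circ> f) z = z"
    by (rule ex2_map_id_on[OF assms(2)]) (simp add: inv_into_f_f[OF assms(1)])
  moreover have "ex2_map m (p \<circ> inv_into X f) (ex2_map m f z) =
      ex2_map m p (ex2_map m (inv_into X f \<circ> f) z)"
    unfolding ex2_map_ex2_map comp_assoc ..
  ultimately show ?thesis by simp
qed

lemma pos_acyclic_fibration_dir_image:
  assumes inj: "inj_on f X" and R: "R \<subseteq> X \<times> X" and fib: "pos_acyclic_fibration X R Y S p"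
  shows "pos_acyclic_fibration (f ` X) (dir_image R f) Y S (p \<circ> inv_into X f)"
proof -
  let ?g = "inv_into X f" and ?R = "dir_image R f"
  have f: "mono_map X R (f ` X) ?R f" using mono_map_dir_image[OF R] .
  have g: "mono_map (f ` X) ?R X R ?g" using mono_map_inv_dir_image[OF inj R] .
  show ?thesis
  proof (rule pos_acyclic_fibrationI)
    show "mono_map (f ` X) ?R Y S (p \<circ> ?g)" using mono_map_comp[OF g pos_acyclic_fibrationD(1)[OF fib]] .
  next
    fix y assume "y \<in> ex2 Y S 0"
    then obtain z where "z \<in> ex2 X R 0" "ex2_map 0 p z = y"
      using pos_acyclic_fibrationD(2)[OF fib] by blast
    then show "\<exists>z\<in>ex2 (f ` X) ?R 0. ex2_map 0 (p \<circ> ?g) z = y"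
      using ex2_map_in_ex2[OF f] ex2_map_inv_into[OF inj] by metis
  next
    fix n xs y
    assume n: "1 \<le> n" and xs: "ex2_boundary (f ` X) ?R n xs" and y: "y \<in> ex2 Y S n"
      and faces: "\<forall>i\<le>n. ex2_face n i y = ex2_map (n - 1) (p \<circ> ?g) (xs i)"
    let ?xs = "\<lambda>i. ex2_map (n - 1) ?g (xs i)"
    have "\<forall>i\<le>n. ex2_face n i y = ex2_map (n - 1) p (?xs i)"
      using faces by (simp add: ex2_map_ex2_map)
    then obtain z where z: "z \<in> ex2 X R n" "\<forall>i\<le>n. ex2_face n i z = ?xs i" "ex2_map n p z = y"
      using pos_acyclic_fibrationD(3)[OF fib n ex2_boundary_ex2_map[OF g xs] y] by blast
    have "ex2_face n i (ex2_map n f z) = xs i" if i: "i \<le> n" for i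
    proof -
      have xs_i: "xs i \<in> ex2 (f ` X) ?R (n - 1)" using xs i unfolding ex2_boundary_def by blast
      have "ex2_face n i (ex2_map n f z) = ex2_map (n - 1) (f \<circ> ?g) (xs i)"
        using z(2) i by (simp add: ex2_face_ex2_map[OF n] ex2_map_ex2_map)
      also have "\<dots> = xs i" using ex2_map_id_on[OF xs_i] f_inv_into_f by (metis comp_apply)
      finally show ?thesis .
    qed
    then show "\<exists>w\<in>ex2 (f ` X) ?R n.
        (\<forall>i\<le>n. ex2_face n i w = xs i) \<and> ex2_map n (p \<circ> ?g) w = y"
      using ex2_map_in_ex2[OF f z(1)] ex2_map_inv_into[OF inj z(1)] z(3) by blast
  qed
qed

section \<open>Collapsing the last stage\<close>

lemma cell_down_new:
  assumes "Cell n z y c \<in> skel Y S (Suc k)" "x \<in> cell_down (Cell n z y c)" "x \<notin> skel Y S k"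
  obtains c' where "c' \<subseteq> c" "x = Cell n z y c'"
  using assms(2)
proof (cases rule: cell_down_CellE)
  case 2
  have "cell_data Y S (skel Y S k) n z y c" using assms(1) by simp
  then have "z c \<in> skel Y S k" using cell_data_attached 2(1) by blast
  then show ?thesis using cell_down_skel 2(2) assms(3) by blast
qed

lemma new_cells_common_bound:
  assumes e1: "e1 \<in> skel Y S (Suc k)" and e2: "e2 \<in> skel Y S (Suc k)"
    and new: "x1 \<notin> skel Y S k" "x2 \<notin> skel Y S k"
    and below: "x1 \<in> cell_down e1" "x2 \<in> cell_down e1" "x1 \<in> cell_down e2" "x2 \<in> cell_down e2"
  obtains m where "m \<in> skel Y S (Suc k)" "x1 \<in> cell_down m" "x2 \<in> cell_down m"
    "m \<in> cell_down e1" "m \<in> cell_down e2"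
proof -
  obtain n z y c where e1_eq: "e1 = Cell n z y c" and ok: "cell_data Y S (skel Y S k) n z y c"
    using e1 by (rule skel_SucE)
  obtain n' z' y' c' where e2_eq: "e2 = Cell n' z' y' c'"
    using e2 by (rule skel_SucE)
  obtain \<beta>1 \<beta>2 where \<beta>: "\<beta>1 \<subseteq> c" "x1 = Cell n z y \<beta>1" "\<beta>2 \<subseteq> c" "x2 = Cell n z y \<beta>2"
    using cell_down_new[OF e1[unfolded e1_eq]] below(1,2) new unfolding e1_eq by metis
  obtain \<beta>1' \<beta>2' where "\<beta>1' \<subseteq> c'" "x1 = Cell n' z' y' \<beta>1'" "\<beta>2' \<subseteq> c'" "x2 = Cell n' z' y' \<beta>2'"
    using cell_down_new[OF e2[unfolded e2_eq]] below(3,4) new unfolding e2_eq by metis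
  then have e2_eq': "e2 = Cell n z y c'" and "\<beta>1 \<union> \<beta>2 \<subseteq> c'" using \<beta> e2_eq by auto
  define m where "m = Cell n z y (\<beta>1 \<union> \<beta>2)"
  have "\<beta>1 \<union> \<beta>2 \<in> sd2_cone n" using sd2_cone_subset cell_dataD(1)[OF ok] \<beta>(1,3) by blast
  then have "m \<in> skel Y S (Suc k)" unfolding m_def using Cell_in_skel_cone e1 e1_eq by blast
  moreover have "x1 \<in> cell_down m" "x2 \<in> cell_down m" "m \<in> cell_down e1" "m \<in> cell_down e2"
    unfolding m_def \<beta>(2,4) e1_eq e2_eq' using \<beta>(1,3) \<open>\<beta>1 \<union> \<beta>2 \<subseteq> c'\<close> by auto
  ultimately show ?thesis using that by blast
qed

text \<open>Pushes a new cell onto the boundary of its cone; at the apex (c = {}) the value z {} is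
  junk, so it is only used above elements of the previous stage.\<close>
definition collapse :: "'b set \<Rightarrow> ('b \<times> 'b) set \<Rightarrow> nat \<Rightarrow> 'b cell \<Rightarrow> 'b cell" where
  "collapse Y S k e = (if e \<in> skel Y S k then e else case e of Base \<Rightarrow> Base | Cell n z y c \<Rightarrow> z c)"

lemma new_cell_above_old_not_apex:
  assumes "Cell n z y c \<notin> skel Y S k" "w \<in> skel Y S k" "w \<in> cell_down (Cell n z y c)"
  shows "c \<noteq> {}"
  using assms by auto

lemma collapse_skel:
  assumes e: "e \<in> skel Y S (Suc k)" and w: "w \<in> skel Y S k" "w \<in> cell_down e"
  shows "collapse Y S k e \<in> skel Y S k \<and> collapse Y S k e \<in> cell_down e"
proof (cases "e \<in> skel Y S k")
  case True
  then show ?thesis unfolding collapse_def using cell_down_refl by simp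
next
  case False
  obtain n z y c where e_eq: "e = Cell n z y c" and ok: "cell_data Y S (skel Y S k) n z y c"
    using e by (rule skel_SucE)
  then have "c \<noteq> {}" using new_cell_above_old_not_apex w False by blast
  then have "z c \<in> skel Y S k" "z c \<in> cell_down e"
    using cell_data_attached[OF ok] cell_down_attached e_eq by blast+
  then show ?thesis using False unfolding collapse_def e_eq by simp
qed

lemma collapse_mono:
  assumes e: "e \<in> skel Y S (Suc k)" and x: "x \<in> cell_down e" and w: "w \<in> skel Y S k" "w \<in> cell_down x"
  shows "collapse Y S k x \<in> cell_down (collapse Y S k e)"
proof (cases "e \<in> skel Y S k")
  case True
  then have "x \<in> skel Y S k" using cell_down_skel x by blast
  then show ?thesis using True x unfolding collapse_def by simp
next
  case e_new: False
  obtain n z y c where e_eq: "e = Cell n z y c" and ok: "cell_data Y S (skel Y S k) n z y c"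
    using e by (rule skel_SucE)
  have "w \<in> cell_down e" using cell_down_trans_skel[OF e x w(2)] .
  then have c: "c \<noteq> {}" using new_cell_above_old_not_apex w e_new unfolding e_eq by blast
  have collapse_e: "collapse Y S k e = z c" using e_new unfolding collapse_def e_eq by simp
  from x[unfolded e_eq] show ?thesis
  proof (cases rule: cell_down_CellE)
    case (1 c')
    have "x \<notin> skel Y S k"
      using 1 e_new Cell_in_skel_cone cell_dataD(1)[OF ok] unfolding e_eq by blast
    then have "c' \<noteq> {}" using new_cell_above_old_not_apex w 1(2) by blast
    then have "z c' \<in> cell_down (z c)" using cell_data_attached_mono[OF ok 1(1)] by blast
    then show ?thesis using collapse_e \<open>x \<notin> skel Y S k\<close> 1(2) unfolding collapse_def by simp
  next
    case 2
    have "x \<in> skel Y S k" using cell_down_skel cell_data_attached[OF ok c] 2(2) by blast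
    then show ?thesis using collapse_e 2(2) unfolding collapse_def by simp
  qed
qed

section \<open>Sections of the free fibration over A\<close>

lemma partial_order_A_rel: "partial_order_on UNIV A_rel"
  unfolding partial_order_on_def preorder_on_def refl_on_def trans_def antisym_def A_rel_def by auto

lemma A_rel_no_interval:
  "(b1, v) \<in> A_rel \<Longrightarrow> (b2, v) \<in> A_rel \<Longrightarrow> (v, c1) \<in> A_rel \<Longrightarrow> (v, c2) \<in> A_rel \<Longrightarrow> False"
  by (cases v) (simp_all add: A_rel_def)

lemma A_rel_deflation_id:
  assumes mono: "\<And>x y. (x, y) \<in> A_rel \<Longrightarrow> (t x, t y) \<in> A_rel"
    and defl: "\<And>x. (t x, x) \<in> A_rel" and "t a1 = a1" "t a2 = a2"
  shows "t x = x"
proof -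
  have b: "t b = b" if "A_level b = 1" for b
    using mono[of a1 b] mono[of a2 b] defl[of b] assms(3,4) that
    by (cases b; cases "t b") (simp_all add: A_rel_def)
  have "t c = c" if "A_level c = 2" for c
    using mono[of b1 c] mono[of b2 c] defl[of c] b[of b1] b[of b2] that
    by (cases c; cases "t c") (simp_all add: A_rel_def)
  then show ?thesis using assms(3,4) b by (cases x) simp_all
qed

lemma finite_A_elt: "finite (UNIV :: A_elt set)"
proof -
  have "(UNIV :: A_elt set) = {a1, a2, b1, b2, c1, c2}" using A_elt.exhaust by blast
  then show ?thesis by (metis finite.emptyI finite_insert)
qed

fun code_A :: "A_elt \<Rightarrow> nat" where
  "code_A a1 = 0" | "code_A a2 = 1" | "code_A b1 = 2" | "code_A b2 = 3" | "code_A c1 = 4" | "code_A c2 = 5"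

definition A_nat :: "nat set" where
  "A_nat = range code_A"

definition A_nat_rel :: "(nat \<times> nat) set" where
  "A_nat_rel = dir_image A_rel code_A"

definition decode_A :: "nat \<Rightarrow> A_elt" where
  "decode_A = inv code_A"

lemma inj_code_A: "inj code_A"
proof (rule injI)
  show "code_A x = code_A y \<Longrightarrow> x = y" for x y by (cases x; cases y) simp_all
qed

lemma decode_code_A [simp]: "decode_A (code_A x) = x"
  unfolding decode_A_def using inj_code_A by simp

lemma partial_order_A_nat: "partial_order_on A_nat A_nat_rel"
  unfolding A_nat_def A_nat_rel_def
  using partial_order_on_dir_image[OF partial_order_A_rel] inj_code_A by blast

lemma decode_A_cell_proj_mono:
  assumes "e \<in> skel A_nat A_nat_rel k" "x \<in> cell_down e"
  shows "(decode_A (cell_proj x), decode_A (cell_proj e)) \<in> A_rel"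
proof -
  have "trans A_nat_rel" using partial_order_A_nat partial_order_onD(2) by blast
  then have "(cell_proj x, cell_proj e) \<in> dir_image A_rel code_A"
    using cell_proj_skel assms unfolding A_nat_rel_def by blast
  then show ?thesis unfolding dir_image_def by auto
qed

definition skel_section :: "nat \<Rightarrow> (A_elt \<Rightarrow> nat cell) \<Rightarrow> bool" where
  "skel_section k s \<longleftrightarrow> (\<forall>x. s x \<in> skel A_nat A_nat_rel k) \<and>
     (\<forall>x y. (x, y) \<in> A_rel \<longrightarrow> s x \<in> cell_down (s y)) \<and> (\<forall>x. decode_A (cell_proj (s x)) = x)"

lemma skel_sectionD:
  assumes "skel_section k s"
  shows "s x \<in> skel A_nat A_nat_rel k" and "(x, y) \<in> A_rel \<Longrightarrow> s x \<in> cell_down (s y)"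
    and "decode_A (cell_proj (s x)) = x"
  using assms unfolding skel_section_def by blast+

lemma skel_section_new_bs:
  assumes s: "skel_section (Suc k) s"
    and new: "s b1 \<notin> skel A_nat A_nat_rel k" "s b2 \<notin> skel A_nat A_nat_rel k"
  shows False
proof -
  note s_skel = skel_sectionD(1)[OF s] and s_label = skel_sectionD(3)[OF s]
  have "s b \<in> cell_down (s c)" if "b = b1 \<or> b = b2" "c = c1 \<or> c = c2" for b c
    using skel_sectionD(2)[OF s] that unfolding A_rel_def by auto
  then obtain m where m: "m \<in> skel A_nat A_nat_rel (Suc k)"
    "s b1 \<in> cell_down m" "s b2 \<in> cell_down m" "m \<in> cell_down (s c1)" "m \<in> cell_down (s c2)"
    using new_cells_common_bound[OF s_skel s_skel] new by metis
  have "(b1, decode_A (cell_proj m)) \<in> A_rel" "(b2, decode_A (cell_proj m)) \<in> A_rel"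
    using decode_A_cell_proj_mono[OF m(1) m(2)] decode_A_cell_proj_mono[OF m(1) m(3)] s_label
    by simp_all
  moreover have "(decode_A (cell_proj m), c1) \<in> A_rel" "(decode_A (cell_proj m), c2) \<in> A_rel"
    using decode_A_cell_proj_mono[OF s_skel m(4)] decode_A_cell_proj_mono[OF s_skel m(5)] s_label
    by simp_all
  ultimately show False by (rule A_rel_no_interval)
qed

lemma skel_section_collapse:
  assumes s: "skel_section (Suc k) s" and b: "s b \<in> skel A_nat A_nat_rel k" "A_level b = 1"
  shows "skel_section k (collapse A_nat A_nat_rel k \<circ> s)"
proof -
  let ?K = "skel A_nat A_nat_rel k" and ?s' = "collapse A_nat A_nat_rel k \<circ> s"
  note s_skel = skel_sectionD(1)[OF s] and s_mono = skel_sectionD(2)[OF s]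
    and s_label = skel_sectionD(3)[OF s]
  have "s a \<in> ?K" if "A_level a = 0" for a
  proof -
    have "(a, b) \<in> A_rel" using b(2) that unfolding A_rel_def by simp
    then show ?thesis using cell_down_skel[OF b(1)] s_mono by blast
  qed
  then have a: "s a1 \<in> ?K" "s a2 \<in> ?K" by simp_all
  have old_below: "\<exists>w\<in>?K. w \<in> cell_down (s x)" for x
    using a s_mono[of a1 x] cell_down_refl[of "s a2"] unfolding A_rel_def by (cases x) auto
  have s': "?s' x \<in> ?K" "?s' x \<in> cell_down (s x)" for x
  proof -
    obtain w where "w \<in> ?K" "w \<in> cell_down (s x)" using old_below by blast
    then show "?s' x \<in> ?K" "?s' x \<in> cell_down (s x)" using collapse_skel[OF s_skel] by simp_all
  qed
  have s'_mono: "?s' x \<in> cell_down (?s' y)" if "(x, y) \<in> A_rel" for x y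
  proof -
    obtain w where "w \<in> ?K" "w \<in> cell_down (s x)" using old_below by blast
    then show ?thesis using collapse_mono[OF s_skel s_mono[OF that]] by simp
  qed
  have "decode_A (cell_proj (?s' x)) = x" for x
  proof (rule A_rel_deflation_id[where t = "\<lambda>x. decode_A (cell_proj (?s' x))"])
    show "(decode_A (cell_proj (?s' x)), decode_A (cell_proj (?s' y))) \<in> A_rel"
      if "(x, y) \<in> A_rel" for x y
      using decode_A_cell_proj_mono[OF s'(1) s'_mono[OF that]] .
    show "(decode_A (cell_proj (?s' x)), x) \<in> A_rel" for x
      using decode_A_cell_proj_mono[OF s_skel s'(2)] s_label by simp
    show "decode_A (cell_proj (?s' a1)) = a1" "decode_A (cell_proj (?s' a2)) = a2"
      using a s_label unfolding collapse_def by simp_all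
  qed
  then show ?thesis using s' s'_mono unfolding skel_section_def by blast
qed

lemma no_skel_section: "\<not> skel_section k s"
proof (induction k arbitrary: s)
  case 0
  show ?case unfolding skel_section_def by simp
next
  case (Suc k)
  show ?case
  proof
    assume s: "skel_section (Suc k) s"
    show False
    proof (cases "s b1 \<in> skel A_nat A_nat_rel k \<or> s b2 \<in> skel A_nat A_nat_rel k")
      case True
      then obtain b where "s b \<in> skel A_nat A_nat_rel k" "A_level b = 1" by auto
      then show False using Suc.IH skel_section_collapse[OF s] by blast
    next
      case False
      then show False using skel_section_new_bs[OF s] by blast
    qed
  qed
qed

lemma no_section_cells:
  assumes "mono_map UNIV A_rel (cells A_nat A_nat_rel) (cells_rel A_nat A_nat_rel) s"
    and "\<forall>x. cell_proj (s x) = code_A x"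
  shows False
proof -
  have "\<forall>x. \<exists>k. s x \<in> skel A_nat A_nat_rel k" using assms(1) unfolding mono_map_def cells_def by blast
  then obtain lvl where lvl: "\<forall>x. s x \<in> skel A_nat A_nat_rel (lvl x)" by metis
  have "lvl x \<le> Max (range lvl)" for x using finite_A_elt by simp
  then have "\<forall>x. s x \<in> skel A_nat A_nat_rel (Max (range lvl))" using lvl skel_mono by blast
  moreover have "\<forall>x y. (x, y) \<in> A_rel \<longrightarrow> s x \<in> cell_down (s y)"
    using assms(1) unfolding mono_map_def cells_rel_def by blast
  moreover have "\<forall>x. decode_A (cell_proj (s x)) = x" using assms(2) by simp
  ultimately show False using no_skel_section unfolding skel_section_def by blast
qed

theorem proposition6p2:
  shows "\<not> pos_cofibrant_wrt TYPE(nat) (UNIV :: A_elt set) A_rel"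
proof
  assume cofibrant: "pos_cofibrant_wrt TYPE(nat) (UNIV :: A_elt set) A_rel"
  let ?V = "cells A_nat A_nat_rel" and ?R = "cells_rel A_nat A_nat_rel"
  let ?f = "to_nat_on ?V"
  have inj: "inj_on ?f ?V" using countable_cells[OF countableI_type] by (rule inj_on_to_nat_on)
  have R: "?R \<subseteq> ?V \<times> ?V" using partial_order_cells by (rule partial_order_onD(4))
  have "trans A_nat_rel" using partial_order_A_nat by (rule partial_order_onD(2))
  then have fib: "pos_acyclic_fibration (?f ` ?V) (dir_image ?R ?f) A_nat A_nat_rel
      (cell_proj \<circ> inv_into ?V ?f)"
    using pos_acyclic_fibration_dir_image[OF inj R] pos_acyclic_fibration_cell_proj by blast
  have code: "mono_map UNIV A_rel A_nat A_nat_rel code_A"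
    unfolding A_nat_def A_nat_rel_def by (rule mono_map_dir_image) simp
  obtain h where h: "mono_map UNIV A_rel (?f ` ?V) (dir_image ?R ?f) h"
    "\<forall>a\<in>UNIV. (cell_proj \<circ> inv_into ?V ?f) (h a) = code_A a"
    using cofibrant[unfolded pos_cofibrant_wrt_def, rule_format, OF _ code]
      partial_order_on_dir_image[OF partial_order_cells inj] partial_order_A_nat fib
    by blast
  have "mono_map UNIV A_rel ?V ?R (inv_into ?V ?f \<circ> h)"
    using mono_map_comp[OF h(1) mono_map_inv_dir_image[OF inj R]] .
  then show False by (rule no_section_cells) (use h(2) in simp)
qed

end
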